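(* Suppose Assumptions 1–4 hold. Let $\mathbf{x}$ be a Cournot candidate and $\mathbf{x}^S$ a social optimum, with $X=\sum_n x_n$ and $X^S=\sum_n x^S_n$. If $p(X)\neq p(X^S)$, then $p(X)>p(X^S)$ and $X<X^S$.
   Context: Cournot model: $N$ suppliers, inverse demand $p:[0,\infty)\to[0,\infty)$, supplier $n$ has cost $C_n:[0,\infty)\to[0,\infty)$ and chooses $x_n\ge0$; $X=\sum_n x_n$. $\partial_\pm$ denote right/left derivatives; $C_n'(0)$ is the right derivative at $0$. Assumption 1: each $C_n$ is convex, continuous, nondecreasing on $[0,\infty)$, continuously differentiable on $(0,\infty)$, with $C_n(0)=0$. Assumption 2: $p$ is continuous, nonnegative, nonincreasing, $p(0)>0$; its right derivative at $0$ exists and at every $q>0$ its left and right derivatives exist. Assumption 3: there exists $R>0$ such that $p(R)\le\min_n C_n'(0)$. Assumption 4: $p(0)>\min_n C_n'(0)$. A social optimum is a nonnegative vector maximizing $\int_0^X p(q)\,dq-\sum_n C_n(x_n)$. A nonnegative vector $\mathbf{x}$ is a Cournot candidate if for every $n$: $C_n'(x_n)\le p(X)+x_n\,\partial_-p(X)$ whenever $x_n>0$, and $C_n'(x_n)\ge p(X)+x_n\,\partial_+p(X)$. *)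

theory Defs
  imports "HOL-Analysis.Analysis"
begin

(* Suppliers are indexed by {..<N}; a production vector is x :: nat => real,
   only its entries on {..<N} matter. *)

definition total :: "nat \<Rightarrow> (nat \<Rightarrow> real) \<Rightarrow> real" where
  "total N x = (\<Sum>n<N. x n)"

definition nonneg_vec :: "nat \<Rightarrow> (nat \<Rightarrow> real) \<Rightarrow> bool" where
  "nonneg_vec N x \<longleftrightarrow> (\<forall>n<N. x n \<ge> 0)"

definition welfare :: "nat \<Rightarrow> (real \<Rightarrow> real) \<Rightarrow> (nat \<Rightarrow> real \<Rightarrow> real) \<Rightarrow> (nat \<Rightarrow> real) \<Rightarrow> real" where
  "welfare N p C x = integral {0..total N x} p - (\<Sum>n<N. C n (x n))"

definition social_optimum :: "nat \<Rightarrow> (real \<Rightarrow> real) \<Rightarrow> (nat \<Rightarrow> real \<Rightarrow> real) \<Rightarrow> (nat \<Rightarrow> real) \<Rightarrow> bool" where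
  "social_optimum N p C x \<longleftrightarrow> nonneg_vec N x \<and>
     (\<forall>y. nonneg_vec N y \<longrightarrow> welfare N p C y \<le> welfare N p C x)"

(* dC n t = C_n'(t) (right derivative at 0); dpL/dpR = left/right derivatives of p *)
definition cournot_candidate :: "nat \<Rightarrow> (real \<Rightarrow> real) \<Rightarrow> (real \<Rightarrow> real) \<Rightarrow> (real \<Rightarrow> real)
     \<Rightarrow> (nat \<Rightarrow> real \<Rightarrow> real) \<Rightarrow> (nat \<Rightarrow> real) \<Rightarrow> bool" where
  "cournot_candidate N p dpL dpR dC x \<longleftrightarrow> nonneg_vec N x \<and>
     (\<forall>n<N. (x n > 0 \<longrightarrow> dC n (x n) \<le> p (total N x) + x n * dpL (total N x)) \<and>
            dC n (x n) \<ge> p (total N x) + x n * dpR (total N x))"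

end

theory Submission imports Defs begin

(* Suppose instead p(X) < p(XS).  As p is nonincreasing, X > XS, so some
   supplier n produces more at the candidate than at the optimum: x_n > xS_n >= 0.
   Three marginal inequalities then chain together:
     p(XS) <= C_n'(xS_n)     first-order condition of the optimum (raising x_n is not profitable),
     C_n'(xS_n) <= C_n'(x_n)  derivatives of the convex cost C_n are monotone,
     C_n'(x_n) <= p(X)       Cournot condition, using that the left derivative of p is <= 0,
   giving p(XS) <= p(X), a contradiction.  Hence p(X) > p(XS), and monotonicity of p
   forces X < XS. *)

lemma deriv_nonpos_at_right_max:
  fixes g :: "real \<Rightarrow> real"
  assumes deriv: "(g has_real_derivative D) (at a within S)"
    and d: "d > 0" and sub: "{a..a+d} \<subseteq> S"
    and max: "\<And>t. t \<in> {a..a+d} \<Longrightarrow> g t \<le> g a"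
  shows "D \<le> 0"
proof (rule ccontr)
  assume "\<not> D \<le> 0"
  then obtain e where e: "e > 0" "\<And>h. h > 0 \<Longrightarrow> a + h \<in> S \<Longrightarrow> h < e \<Longrightarrow> g a < g (a + h)"
    using has_real_derivative_pos_inc_right[OF deriv] by force
  define h where "h = min e d / 2"
  have h: "h > 0" "h < e" "h \<le> d" using e d by (auto simp: h_def)
  moreover have "a + h \<in> S" using sub h by auto
  ultimately have "g a < g (a + h)" using e(2) by blast
  moreover have "g (a + h) \<le> g a" using max h by auto
  ultimately show False by simp
qed

lemma deriv_nonpos_at_left_min:
  fixes g :: "real \<Rightarrow> real"
  assumes deriv: "(g has_real_derivative D) (at a within S)"
    and d: "d > 0" and sub: "{a-d..a} \<subseteq> S"
    and min: "\<And>t. t \<in> {a-d..a} \<Longrightarrow> g a \<le> g t"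
  shows "D \<le> 0"
proof (rule ccontr)
  assume "\<not> D \<le> 0"
  then obtain e where e: "e > 0" "\<And>h. h > 0 \<Longrightarrow> a - h \<in> S \<Longrightarrow> h < e \<Longrightarrow> g (a - h) < g a"
    using has_real_derivative_pos_inc_left[OF deriv] by force
  define h where "h = min e d / 2"
  have h: "h > 0" "h < e" "h \<le> d" using e d by (auto simp: h_def)
  moreover have "a - h \<in> S" using sub h by auto
  ultimately have "g (a - h) < g a" using e(2) by blast
  moreover have "g a \<le> g (a - h)" using min h by auto
  ultimately show False by simp
qed

text \<open>The left derivative of a nonincreasing function is nonpositive; this makes the
  strategic term x_n * dp_-(X) in the Cournot condition harmless.\<close>

lemma antitone_left_deriv_nonpos:
  fixes p :: "real \<Rightarrow> real"
  assumes anti: "\<And>a b. 0 \<le> a \<Longrightarrow> a \<le> b \<Longrightarrow> p b \<le> p a"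
    and q: "q > 0" and deriv: "(p has_real_derivative l) (at q within {..q})"
  shows "l \<le> 0"
  by (rule deriv_nonpos_at_left_min[OF deriv q]) (use anti in auto)

text \<open>One-sided derivatives of a convex function on a half-line are monotone: the
  derivative at a is below the secant slope on [a,b], which is below the derivative at b.\<close>

lemma convex_deriv_mono:
  fixes f :: "real \<Rightarrow> real"
  assumes cv: "convex_on {l..} f" and ab: "l \<le> a" "a < b"
    and da: "(f has_real_derivative fa) (at a within {l..})"
    and db: "(f has_real_derivative fb) (at b within {l..})"
  shows "fa \<le> fb"
proof -
  define s where "s = (f b - f a) / (b - a)"
  have "fb * (a - b) \<le> f a - f b"
    by (rule convex_on_imp_above_tangent[OF cv _ _ _ db]) (use ab in auto)
  then have slope_le: "s \<le> fb" using ab by (simp add: s_def field_simps)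
  have chord: "f t - s * t \<le> f a - s * a" if "t \<in> {a..a + (b - a)}" for t
  proof -
    have "convex_on {a..b} f" by (rule convex_on_subset[OF cv]) (use ab in auto)
    from convex_onD_Icc'[OF this, of t] that have "f t \<le> s * (t - a) + f a"
      by (simp add: s_def)
    then show ?thesis by (simp add: algebra_simps)
  qed
  have "((\<lambda>t. f t - s * t) has_real_derivative fa - s) (at a within {l..})"
    by (auto intro!: derivative_eq_intros da)
  then have "fa - s \<le> 0"
    by (rule deriv_nonpos_at_right_max[where d = "b - a"]) (use ab chord in auto)
  with slope_le show ?thesis by simp
qed

lemma sum_fun_upd:
  fixes f :: "'a \<Rightarrow> 'b \<Rightarrow> 'c::ab_group_add"
  assumes "finite A" "n \<in> A"
  shows "(\<Sum>k\<in>A. f k ((x(n := v)) k)) = (\<Sum>k\<in>A. f k (x k)) - f n (x n) + f n v"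
proof -
  have rest: "(\<Sum>k\<in>A - {n}. f k ((x(n := v)) k)) = (\<Sum>k\<in>A - {n}. f k (x k))"
    by (rule sum.cong) auto
  show ?thesis
    using sum.remove[OF assms, of "\<lambda>k. f k ((x(n := v)) k)"] sum.remove[OF assms, of "\<lambda>k. f k (x k)"] rest
    by simp
qed

lemma total_nonneg: "nonneg_vec N x \<Longrightarrow> total N x \<ge> 0"
  unfolding total_def nonneg_vec_def by (auto intro: sum_nonneg)

lemma total_update: "n < N \<Longrightarrow> total N (x(n := v)) = total N x - x n + v"
  unfolding total_def using sum_fun_upd[of "{..<N}" n "\<lambda>k y. y" x v] by simp

lemma total_lt_imp_coord_lt:
  assumes "total N y < total N x"
  obtains n where "n < N" "y n < x n"
proof (rule ccontr)
  assume "\<not> thesis"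
  with that have "\<And>n. n < N \<Longrightarrow> x n \<le> y n" by (meson not_le)
  then have "total N x \<le> total N y" unfolding total_def by (intro sum_mono) auto
  with assms show False by simp
qed

lemma welfare_update:
  assumes "n < N"
  shows "welfare N p C (x(n := v)) - welfare N p C x
       = (integral {0..total N x - x n + v} p - integral {0..total N x} p) - (C n v - C n (x n))"
  using sum_fun_upd[of "{..<N}" n C x v] assms unfolding welfare_def total_update[OF assms]
  by simp

text \<open>First-order condition of a social optimum: the price at the optimal total output
  does not exceed any supplier's (right) marginal cost, since otherwise a small increase
  of that supplier's output would raise welfare.\<close>

lemma social_optimum_price_le_marginal_cost:
  fixes p :: "real \<Rightarrow> real"
  assumes n: "n < N" and opt: "social_optimum N p C xS"
    and p_cont: "continuous_on {0..} p"
    and Cd: "(C n has_real_derivative d) (at (xS n) within {0..})"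
  shows "p (total N xS) \<le> d"
proof -
  define X where "X = total N xS"
  define a where "a = xS n"
  have nonneg: "nonneg_vec N xS"
    and best: "\<And>y. nonneg_vec N y \<Longrightarrow> welfare N p C y \<le> welfare N p C xS"
    using opt by (auto simp: social_optimum_def)
  have X0: "X \<ge> 0" using nonneg by (simp add: X_def total_nonneg)
  have a0: "a \<ge> 0" using nonneg n by (auto simp: a_def nonneg_vec_def)
  \<comment> \<open>welfare, up to a constant, when supplier n raises its output by t\<close>
  define g where "g t = integral {0..X + t} p - C n (a + t)" for t
  have g_max: "g t \<le> g 0" if "t \<ge> 0" for t
  proof -
    have "nonneg_vec N (xS(n := a + t))" using nonneg a0 that by (auto simp: nonneg_vec_def)
    then have "welfare N p C (xS(n := a + t)) - welfare N p C xS \<le> 0" using best by simp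
    then show ?thesis using welfare_update[OF n] by (simp add: g_def X_def a_def)
  qed
  have "((\<lambda>s. integral {0..s} p) has_real_derivative p X) (at X within {0..X+1})"
    by (rule integral_has_real_derivative) (use X0 in \<open>auto intro: continuous_on_subset[OF p_cont]\<close>)
  then have "((\<lambda>s. integral {0..s} p) has_real_derivative p X) (at X within {X..X+1})"
    by (rule has_field_derivative_subset) (use X0 in auto)
  then have "((\<lambda>s. integral {0..s} p) has_real_derivative p X) (at (X + 0) within (+) X ` {0..1})"
    by (simp add: add.commute)
  then have surplus_deriv: "((\<lambda>t. integral {0..X + t} p) has_real_derivative p X) (at 0 within {0..1})"
    by (simp only: DERIV_at_within_shift)
  have "(C n has_real_derivative d) (at a within {a..a+1})"
    by (rule has_field_derivative_subset[OF Cd[folded a_def]]) (use a0 in auto)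
  then have "(C n has_real_derivative d) (at (a + 0) within (+) a ` {0..1})"
    by (simp add: add.commute)
  then have cost_deriv: "((\<lambda>t. C n (a + t)) has_real_derivative d) (at 0 within {0..1})"
    by (simp only: DERIV_at_within_shift)
  have "(g has_real_derivative p X - d) (at 0 within {0..1})"
    unfolding g_def by (rule DERIV_diff[OF surplus_deriv cost_deriv])
  then have "p X - d \<le> 0"
    by (rule deriv_nonpos_at_right_max[where d = 1]) (use g_max in auto)
  then show ?thesis by (simp add: X_def)
qed

lemma cournot_price_ge_optimal_price:
  fixes p :: "real \<Rightarrow> real"
  assumes C_convex: "\<And>n. n < N \<Longrightarrow> convex_on {0..} (C n)"
    and C_deriv: "\<And>n t. n < N \<Longrightarrow> t \<ge> 0 \<Longrightarrow> (C n has_real_derivative dC n t) (at t within {0..})"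
    and p_cont: "continuous_on {0..} p"
    and p_antimono: "\<And>a b. 0 \<le> a \<Longrightarrow> a \<le> b \<Longrightarrow> p b \<le> p a"
    and p_left_deriv: "\<And>q. q > 0 \<Longrightarrow> (p has_real_derivative dpL q) (at q within {..q})"
    and cand: "cournot_candidate N p dpL dpR dC x"
    and opt: "social_optimum N p C xS"
  shows "p (total N xS) \<le> p (total N x)"
proof (rule ccontr)
  define X where "X = total N x"
  define XS where "XS = total N xS"
  assume "\<not> p XS \<le> p X"
  then have price_lt: "p X < p XS" by (simp add: XS_def X_def)
  have nonneg_x: "nonneg_vec N x" using cand by (simp add: cournot_candidate_def)
  have nonneg_xS: "nonneg_vec N xS" using opt by (simp add: social_optimum_def)
  have "XS < X"
    using price_lt p_antimono[of X XS] total_nonneg[OF nonneg_x] by (force simp: X_def)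
  then obtain n where n: "n < N" "xS n < x n"
    using total_lt_imp_coord_lt[of N xS x] by (auto simp: X_def XS_def)
  have xS_n: "xS n \<ge> 0" using nonneg_xS n by (simp add: nonneg_vec_def)
  then have x_n: "x n > 0" using n by simp
  have "x n \<le> X" unfolding X_def total_def
    by (rule member_le_sum) (use n nonneg_x in \<open>auto simp: nonneg_vec_def\<close>)
  then have X_pos: "X > 0" using x_n by simp
  have "p XS \<le> dC n (xS n)" unfolding XS_def
    by (rule social_optimum_price_le_marginal_cost[OF n(1) opt p_cont C_deriv[OF n(1) xS_n]])
  also have "\<dots> \<le> dC n (x n)"
    using convex_deriv_mono[OF C_convex[OF n(1)] xS_n n(2) C_deriv[OF n(1) xS_n] C_deriv[OF n(1)]] x_n
    by simp
  also have "\<dots> \<le> p X + x n * dpL X"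
    using cand n x_n by (simp add: cournot_candidate_def X_def)
  also have "\<dots> \<le> p X"
    using antitone_left_deriv_nonpos[OF p_antimono X_pos p_left_deriv[OF X_pos]] x_n
    by (simp add: mult_nonneg_nonpos)
  finally show False using price_lt by simp
qed

theorem proposition7:
  fixes N :: nat
    and p :: "real \<Rightarrow> real" and dpL dpR :: "real \<Rightarrow> real"
    and C :: "nat \<Rightarrow> real \<Rightarrow> real" and dC :: "nat \<Rightarrow> real \<Rightarrow> real"
    and x xS :: "nat \<Rightarrow> real"
  assumes N_pos: "N \<ge> 1"
    (* Assumption 1 *)
    and C_convex: "\<And>n. n < N \<Longrightarrow> convex_on {0..} (C n)"
    and C_cont: "\<And>n. n < N \<Longrightarrow> continuous_on {0..} (C n)"
    and C_mono: "\<And>n. n < N \<Longrightarrow> mono_on {0..} (C n)"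
    and C_deriv: "\<And>n t. n < N \<Longrightarrow> t \<ge> 0 \<Longrightarrow> (C n has_real_derivative dC n t) (at t within {0..})"
    and C_C1: "\<And>n. n < N \<Longrightarrow> continuous_on {0<..} (dC n)"
    and C_zero: "\<And>n. n < N \<Longrightarrow> C n 0 = 0"
    (* Assumption 2 *)
    and p_cont: "continuous_on {0..} p"
    and p_nonneg: "\<And>q. q \<ge> 0 \<Longrightarrow> p q \<ge> 0"
    and p_antimono: "\<And>a b. 0 \<le> a \<Longrightarrow> a \<le> b \<Longrightarrow> p b \<le> p a"
    and p0_pos: "p 0 > 0"
    and p_right_deriv: "\<And>q. q \<ge> 0 \<Longrightarrow> (p has_real_derivative dpR q) (at q within {q..})"
    and p_left_deriv: "\<And>q. q > 0 \<Longrightarrow> (p has_real_derivative dpL q) (at q within {..q})"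
    (* Assumption 3 *)
    and A3: "\<exists>R>0. p R \<le> (MIN n\<in>{..<N}. dC n 0)"
    (* Assumption 4 *)
    and A4: "p 0 > (MIN n\<in>{..<N}. dC n 0)"
    and cand: "cournot_candidate N p dpL dpR dC x"
    and opt: "social_optimum N p C xS"
    and neq: "p (total N x) \<noteq> p (total N xS)"
  shows "p (total N x) > p (total N xS) \<and> total N x < total N xS"
proof -
  have price_gt: "p (total N x) > p (total N xS)"
    using cournot_price_ge_optimal_price[OF C_convex C_deriv p_cont p_antimono p_left_deriv cand opt] neq
    by simp
  have "total N xS \<ge> 0" using opt by (simp add: social_optimum_def total_nonneg)
  then have "total N x < total N xS"
    using price_gt p_antimono[of "total N xS" "total N x"] by force
  with price_gt show ?thesis by simp
qed

end
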